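(* Let $p$ be an odd prime, let $0<s<p-1$ be an integer, and let $0<a,a'<p$ be integers with $a'\equiv sa\pmod p$. Then $b_{1,s}(a)=0$ in $\mathbb F_p$ (evaluating at $a$ viewed as an element of $\mathbb F_p$) if and only if $a+a'<p$.
   Context: $\mathbb F_p$ is the field of $p$ elements, $\alpha$ an indeterminate, $\binom{x}{m}=x(x-1)\cdots(x-m+1)/m!$. For integers $0<r,s<p$ (interpreted as elements of $\mathbb F_p$), $b_{r,s}(\alpha)=\sum_{k=0}^{p-1}(-r/s)^k\binom{r\alpha-1}{p-1-k}\binom{s\alpha-1}{k}\in\mathbb F_p[\alpha]$. *)

theory Defs
  imports "HOL-Computational_Algebra.Polynomial" "HOL-Number_Theory.Cong" "HOL-Library.Cardinality"
begin

text \<open>The field F_p is represented by an arbitrary field type 'a with exactly p elements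
  (unique up to isomorphism).\<close>

definition binom_poly :: "'a::field poly \<Rightarrow> nat \<Rightarrow> 'a poly" where
  "binom_poly x m = smult (inverse (of_nat (fact m))) (\<Prod>i<m. x - [:of_nat i:])"

definition b_poly :: "nat \<Rightarrow> nat \<Rightarrow> 'a::{field,finite} poly" where
  "b_poly r s = (\<Sum>k<CARD('a).
      smult ((- (of_nat r / of_nat s)) ^ k)
        (binom_poly [:-1, of_nat r:] (CARD('a) - 1 - k) * binom_poly [:-1, of_nat s:] k))"

end

theory Submission
  imports Defs "HOL-Number_Theory.Residues"
begin

text \<open>
  Put A = a - 1, B = a' - 1 and t = -1/s. As s a = a' in the field, b_{1,s}(a) equals
  \<Sum>_k t^k (B choose k) (A choose p - 1 - k), the coefficient of x^(p-1) in
  (1 + t x)^B (1 + x)^A. Writing 1 + t x = t (1 + x) + (1 - t) turns it into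
  \<Sum>_j (B choose j) t^j (1 - t)^(B-j) (A + j choose p - 1), and modulo p the binomial
  (N choose p - 1) vanishes for N \<le> 2p - 2 unless N = p - 1. So only j = p - a can
  contribute. It lies outside 0..B exactly when a + a' < p (a + a' = p is impossible, as it
  would force (1 + s) a = 0), and otherwise its term is nonzero because B < p and
  t, 1 - t \<noteq> 0.
\<close>

text \<open>HOL-Algebra, imported for \<open>CHAR_dvd_CARD\<close>, also declares \<open>coeff\<close> and \<open>smult\<close>.\<close>
hide_const (open) UnivPoly.coeff Module.smult

lemma of_nat_fact_mult_choose:
  "of_nat (fact m * (N choose m)) = (\<Prod>i<m. of_nat N - of_nat i :: 'a::comm_ring_1)"
proof -
  have "int (fact m * (N choose m)) = (\<Prod>i<m. int N - int i)"
    by (simp add: int_binomial gbinomial_int_mult_fact atLeast0LessThan)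
  then have "of_int (int (fact m * (N choose m))) = (of_int (\<Prod>i<m. int N - int i) :: 'a)"
    by (rule arg_cong)
  then show ?thesis
    by (simp only: of_int_of_nat_eq of_int_prod of_int_diff)
qed

lemma coeff_one_linear_power:
  fixes t :: "'a::comm_semiring_1"
  shows "coeff ([:1, t:] ^ n) k = of_nat (n choose k) * t ^ k"
proof (cases "k \<le> n")
  case True
  then show ?thesis by (simp add: coeff_linear_poly_power)
next
  case False
  then have "coeff ([:1, t:] ^ n) k = 0"
    by (intro coeff_eq_0 le_less_trans[OF degree_power_le]) auto
  with False show ?thesis by (simp add: binomial_eq_0)
qed

lemma weighted_Vandermonde:
  fixes t :: "'a::comm_ring_1"
  shows "(\<Sum>k\<le>n. t ^ k * of_nat (B choose k) * of_nat (A choose (n - k)))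
       = (\<Sum>j\<le>B. of_nat (B choose j) * t ^ j * (1 - t) ^ (B - j) * of_nat ((A + j) choose n))"
proof -
  have "[:1, t:] ^ B = (smult t [:1, 1:] + [:1 - t:]) ^ B"
    by simp
  also have "\<dots> = (\<Sum>j\<le>B. of_nat (B choose j) * smult t [:1, 1:] ^ j * [:1 - t:] ^ (B - j))"
    by (rule binomial_ring)
  also have "\<dots> = (\<Sum>j\<le>B. smult (of_nat (B choose j) * t ^ j * (1 - t) ^ (B - j)) ([:1, 1:] ^ j))"
    unfolding smult_power by (simp add: poly_const_pow of_nat_poly mult_ac)
  finally have expand: "[:1, t:] ^ B
      = (\<Sum>j\<le>B. smult (of_nat (B choose j) * t ^ j * (1 - t) ^ (B - j)) ([:1, 1:] ^ j))" .
  have "[:1, t:] ^ B * [:1, 1:] ^ A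
      = (\<Sum>j\<le>B. smult (of_nat (B choose j) * t ^ j * (1 - t) ^ (B - j)) ([:1, 1:] ^ (A + j)))"
    unfolding expand sum_distrib_right by (simp add: power_add mult_ac)
  then have "coeff ([:1, t:] ^ B * [:1, 1:] ^ A) n
      = (\<Sum>j\<le>B. of_nat (B choose j) * t ^ j * (1 - t) ^ (B - j) * of_nat ((A + j) choose n))"
    by (simp add: coeff_sum coeff_one_linear_power)
  then show ?thesis
    unfolding coeff_mult coeff_one_linear_power by (simp add: mult_ac)
qed

lemma prime_dvd_choose_pred:
  assumes "prime p" "N \<noteq> p - 1" "N \<le> 2 * p - 2"
  shows "p dvd (N choose (p - 1))"
proof (cases "N < p - 1")
  case True
  then show ?thesis by (simp add: binomial_eq_0)
next
  case False
  with assms have "p \<le> N" by linarith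
  have "p \<ge> 2" using assms(1) prime_ge_2_nat by blast
  have "fact (p - 1) * fact (N - (p - 1)) * (N choose (p - 1)) = fact N"
    using binomial_fact_lemma[of "p - 1" N] \<open>p \<le> N\<close> by simp
  moreover have "p dvd fact N"
    using prime_dvd_fact_iff[OF assms(1)] \<open>p \<le> N\<close> by simp
  moreover have "\<not> p dvd fact (p - 1)" "\<not> p dvd fact (N - (p - 1))"
    using prime_dvd_fact_iff[OF assms(1)] \<open>p \<ge> 2\<close> assms(3) by simp_all
  ultimately show ?thesis
    using assms(1) by (metis prime_dvd_mult_iff)
qed

lemma prime_not_dvd_choose:
  assumes "prime p" "k \<le> n" "n < p"
  shows "\<not> p dvd (n choose k)"
proof
  assume "p dvd (n choose k)"
  then have "p dvd fact n"
    using binomial_fact_lemma[OF assms(2)] by (metis dvd_mult)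
  with assms show False by (simp add: prime_dvd_fact_iff)
qed

lemma CHAR_eq_prime_CARD:
  assumes "prime CARD('a::{field,finite})"
  shows "CHAR('a) = CARD('a)"
proof -
  have "prime CHAR('a)"
    by (intro prime_CHAR_semidom finite_imp_CHAR_pos) simp
  moreover have "CHAR('a) dvd CARD('a)"
    using CHAR_dvd_CARD by simp
  ultimately show ?thesis
    using assms primes_dvd_imp_eq by blast
qed

lemma sum_mult_choose_pred_CHAR:
  fixes c :: "nat \<Rightarrow> 'a::comm_ring_1"
  assumes "prime CHAR('a)" "A + B \<le> 2 * CHAR('a) - 2"
  shows "(\<Sum>j\<le>B. c j * of_nat ((A + j) choose (CHAR('a) - 1)))
       = (if A < CHAR('a) \<and> CHAR('a) \<le> A + B + 1 then c (CHAR('a) - 1 - A) else 0)"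
proof -
  let ?p = "CHAR('a)"
  have "?p > 0"
    using assms(1) prime_gt_0_nat by blast
  have "c j * of_nat ((A + j) choose (?p - 1)) = (if j = ?p - 1 - A \<and> A < ?p then c j else 0)"
    if "j \<le> B" for j
  proof (cases "A + j = ?p - 1")
    case False
    then have "of_nat ((A + j) choose (?p - 1)) = (0::'a)"
      using prime_dvd_choose_pred[OF assms(1) False] assms(2) that
      by (simp add: of_nat_eq_0_iff_char_dvd)
    with False show ?thesis by auto
  qed (use \<open>?p > 0\<close> in auto)
  then have "(\<Sum>j\<le>B. c j * of_nat ((A + j) choose (?p - 1)))
      = (\<Sum>j\<le>B. if j = ?p - 1 - A then (if A < ?p then c j else 0) else 0)"
    by (intro sum.cong) auto
  also have "\<dots> = (if A < ?p \<and> ?p \<le> A + B + 1 then c (?p - 1 - A) else 0)"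
    by auto
  finally show ?thesis .
qed

lemma poly_binom_poly_of_nat:
  fixes x :: "'a::field poly"
  assumes "poly x y = of_nat N" "of_nat (fact m) \<noteq> (0::'a)"
  shows "poly (binom_poly x m) y = of_nat (N choose m)"
proof -
  have "poly (binom_poly x m) y = inverse (of_nat (fact m)) * (\<Prod>i<m. of_nat N - of_nat i)"
    by (simp add: binom_poly_def poly_prod assms(1))
  also have "\<dots> = inverse (of_nat (fact m)) * (of_nat (fact m) * of_nat (N choose m))"
    by (simp flip: of_nat_fact_mult_choose)
  also have "\<dots> = of_nat (N choose m)"
    using assms(2) by simp
  finally show ?thesis .
qed

lemma poly_b_poly_of_nat:
  fixes x :: "'a::{field,finite}"
  assumes "prime CARD('a)" "of_nat r * x = of_nat (Suc A)" "of_nat s * x = of_nat (Suc B)"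
  shows "poly (b_poly r s) x = (\<Sum>k<CARD('a).
           (- (of_nat r / of_nat s)) ^ k * of_nat (B choose k) * of_nat (A choose (CARD('a) - 1 - k)))"
proof -
  have fact_nonzero: "of_nat (fact m) \<noteq> (0::'a)" if "m < CARD('a)" for m
    using that assms(1) CHAR_eq_prime_CARD[OF assms(1)]
    by (simp add: of_nat_eq_0_iff_char_dvd prime_dvd_fact_iff)
  have "poly [:-1, of_nat r:] x = of_nat A" "poly [:-1, of_nat s:] x = of_nat B"
    using assms(2,3) by (simp_all add: algebra_simps)
  then have "poly (binom_poly [:-1, of_nat r:] m) x = of_nat (A choose m)"
    and "poly (binom_poly [:-1, of_nat s:] m) x = of_nat (B choose m)" if "m < CARD('a)" for m
    using poly_binom_poly_of_nat fact_nonzero[OF that] by blast+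
  then show ?thesis
    unfolding b_poly_def poly_sum poly_smult poly_mult
    by (intro sum.cong refl) (simp add: mult_ac)
qed

lemma poly_b_poly_one_of_nat:
  fixes a a' s :: nat
  assumes "prime p" "CARD('a::{field,finite}) = p"
    and "0 < a" "a < p" "0 < a'" "a' < p"
    and "of_nat s * of_nat a = (of_nat a' :: 'a)"
  defines "t \<equiv> - (1 / of_nat s) :: 'a"
  shows "poly (b_poly 1 s :: 'a poly) (of_nat a)
       = (if p < a + a'
          then of_nat ((a' - 1) choose (p - a)) * t ^ (p - a) * (1 - t) ^ (a' - 1 - (p - a))
          else 0)"
proof -
  define c where "c j = of_nat ((a' - 1) choose j) * t ^ j * (1 - t) ^ (a' - 1 - j)" for j
  have "poly (b_poly 1 s :: 'a poly) (of_nat a)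
      = (\<Sum>k\<le>p - 1. t ^ k * of_nat ((a' - 1) choose k) * of_nat ((a - 1) choose (p - 1 - k)))"
    using poly_b_poly_of_nat[of 1 "of_nat a :: 'a" "a - 1" s "a' - 1"] assms prime_gt_0_nat[OF assms(1)]
    by (simp add: lessThan_Suc_atMost[symmetric])
  also have "\<dots> = (\<Sum>j\<le>a' - 1. c j * of_nat ((a - 1 + j) choose (p - 1)))"
    unfolding weighted_Vandermonde c_def ..
  also have "\<dots> = (if p < a + a' then c (p - a) else 0)"
    using sum_mult_choose_pred_CHAR[of "a - 1" "a' - 1" c] CHAR_eq_prime_CARD[where 'a='a] assms(1-6)
    by auto
  finally show ?thesis
    unfolding c_def .
qed

theorem theorem12:
  fixes p s a a' :: nat
  assumes "prime p" and "odd p"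
    and "CARD('a::{field,finite}) = p"
    and "0 < s" and "s < p - 1"
    and "0 < a" and "a < p" and "0 < a'" and "a' < p"
    and "[a' = s * a] (mod p)"
  shows "poly (b_poly 1 s :: 'a poly) (of_nat a) = 0 \<longleftrightarrow> a + a' < p"
proof -
  have CHAR: "CHAR('a) = p"
    using CHAR_eq_prime_CARD[where 'a='a] assms(1,3) by simp
  have of_nat_eq_0: "(of_nat n :: 'a) = 0 \<longleftrightarrow> p dvd n" for n
    using CHAR by (simp add: of_nat_eq_0_iff_char_dvd)
  have s_times_a: "of_nat s * of_nat a = (of_nat a' :: 'a)"
    using of_nat_eq_iff_cong_CHAR[of "s * a" a', where 'a='a] CHAR assms(10)
    by (simp add: cong_sym)
  define t :: 'a where "t = - (1 / of_nat s)"
  have Suc_s: "(of_nat (Suc s) :: 'a) \<noteq> 0" and "(of_nat s :: 'a) \<noteq> 0" "(of_nat a :: 'a) \<noteq> 0"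
    unfolding of_nat_eq_0 using assms(4-7) by (auto dest: dvd_imp_le)
  then have "t \<noteq> 0" "1 - t \<noteq> 0"
    by (auto simp: t_def field_simps)
  have "a + a' \<noteq> p"
  proof
    assume "a + a' = p"
    then have "of_nat a + of_nat a' = (0::'a)"
      using of_nat_eq_0[of "a + a'"] by (simp only: of_nat_add[symmetric] dvd_refl)
    then have "of_nat (Suc s) * of_nat a = (0::'a)"
      using s_times_a by (simp add: algebra_simps)
    with Suc_s \<open>of_nat a \<noteq> 0\<close> show False by simp
  qed
  moreover have "(of_nat ((a' - 1) choose (p - a)) :: 'a) \<noteq> 0" if "p < a + a'"
    using that prime_not_dvd_choose[OF assms(1), of "p - a" "a' - 1"] assms(9)
    by (simp add: of_nat_eq_0)
  ultimately show ?thesis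
    unfolding poly_b_poly_one_of_nat[OF assms(1,3,6-9) s_times_a] t_def[symmetric]
    using \<open>t \<noteq> 0\<close> \<open>1 - t \<noteq> 0\<close> by auto
qed

end
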